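(* Let $G$ be a group, $n\ge2$, $X=\{x_1,\dots,x_n\}$, fix a function $X\to G$, and let $(\mathcal X_l)_{l\ge1}$ be a non-backtracking random walk on $(G,X)$. If the Markov chain $(\mathcal X_l)$ on $\Omega$ is irreducible, then its period is either $1$ or $2$.
   Context: Let $G$ be a group, $X=\{x_1,\dots,x_n\}$ a set with $n\ge 2$, and fix a function $X\to G$; we identify each $x_i$ with its image in $G$. Let $\Omega=G\times\{\pm1,\pm2,\dots,\pm n\}$, with elements written $(g,\epsilon i)$, $g\in G$, $\epsilon=\pm1$, $i\in\{1,\dots,n\}$. A non-backtracking random walk on $(G,X)$ is a Markov chain $(\mathcal X_l)_{l\ge1}$ on $\Omega$ with transition probabilities $\mathbb P(\mathcal X_{l+1}=(g,\epsilon i)\mid \mathcal X_l=(h,\epsilon' j))=\alpha_{\epsilon' j,\epsilon i}$ if $g=hx_i^{\epsilon}$ and $\epsilon i\neq -\epsilon' j$, and $=0$ otherwise, where the $\alpha_{\epsilon' j,\epsilon i}$ are positive constants with $\sum_{\epsilon i\neq-\epsilon' j}\alpha_{\epsilon' j,\epsilon i}=1$ for each $\epsilon' j$; and with initial distribution $\mathbb P(\mathcal X_1=(g,\epsilon i))=\beta_{\epsilon i}$ if $g=x_i^{\epsilon}$ and $0$ otherwise, for positive constants $\beta_{\epsilon i}$ summing to $1$. Irreducibility and period refer to the Markov chain on the full state space $\Omega$. *)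

theory Defs
  imports "HOL-Algebra.Group" "HOL-Analysis.Infinite_Sum"
begin

text \<open>Signed indices \<epsilon> i (\<epsilon> = +-1, i in 1..n) are encoded as nonzero integers s with |s| <= n.\<close>
definition signed_idx :: "nat \<Rightarrow> int set" where
  "signed_idx n = {s. s \<noteq> 0 \<and> \<bar>s\<bar> \<le> int n}"

definition nbstates :: "('g, 'b) monoid_scheme \<Rightarrow> nat \<Rightarrow> ('g \<times> int) set" where
  "nbstates G n = carrier G \<times> signed_idx n"

definition gen_pow :: "('g, 'b) monoid_scheme \<Rightarrow> (nat \<Rightarrow> 'g) \<Rightarrow> int \<Rightarrow> 'g" where
  "gen_pow G x s = (if s > 0 then x (nat s) else inv\<^bsub>G\<^esub> (x (nat (- s))))"

definition nb_trans ::
  "('g, 'b) monoid_scheme \<Rightarrow> (nat \<Rightarrow> 'g) \<Rightarrow> (int \<Rightarrow> int \<Rightarrow> real) \<Rightarrow> ('g \<times> int) \<Rightarrow> ('g \<times> int) \<Rightarrow> real" where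
  "nb_trans G x \<alpha> a b =
     (if fst b = fst a \<otimes>\<^bsub>G\<^esub> gen_pow G x (snd b) \<and> snd b \<noteq> - snd a
      then \<alpha> (snd a) (snd b) else 0)"

fun mstep :: "'s set \<Rightarrow> ('s \<Rightarrow> 's \<Rightarrow> real) \<Rightarrow> nat \<Rightarrow> 's \<Rightarrow> 's \<Rightarrow> real" where
  "mstep S P 0 a b = (if a = b then 1 else 0)"
| "mstep S P (Suc m) a b = (\<Sum>\<^sub>\<infinity>c\<in>S. mstep S P m a c * P c b)"

definition irreducible_chain :: "'s set \<Rightarrow> ('s \<Rightarrow> 's \<Rightarrow> real) \<Rightarrow> bool" where
  "irreducible_chain S P \<longleftrightarrow> (\<forall>a\<in>S. \<forall>b\<in>S. \<exists>m. mstep S P m a b > 0)"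

definition period_of :: "'s set \<Rightarrow> ('s \<Rightarrow> 's \<Rightarrow> real) \<Rightarrow> 's \<Rightarrow> nat" where
  "period_of S P a = Gcd {m. m \<ge> 1 \<and> mstep S P m a a > 0}"

end

theory Submission
  imports Defs
begin

text \<open>Positivity of m-step transition probabilities depends only on the directed graph of positive
  one-step transitions, so the period of a state is the gcd of the lengths of closed walks through
  it. In a strongly connected graph these lengths define a phase \<open>\<phi>\<close> with \<open>\<phi> c = \<phi> b + m\<close>
  modulo the period whenever a walk of length m leads from b to c. The non-backtracking graph is
  reversible: read backwards, with every state (g, s) replaced by (g x_s^-1, -s), a walk is again
  a walk, so \<open>\<phi> a + \<phi> (reverse a)\<close> is constant modulo the period. As there are at least
  three signed indices, this makes \<open>\<phi>\<close> constant on each fibre {g} \<times> {+-1, ..., +-n}. The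
  edges (g, s) \<rightarrow> (g x_s, s) and (g x_s, -s) \<rightarrow> (g, -s) then give a phase shift of 2
  between fibres of equal phase, so the period divides 2.\<close>

definition pos_edges :: "'s set \<Rightarrow> ('s \<Rightarrow> 's \<Rightarrow> real) \<Rightarrow> 's rel" where
  "pos_edges S P = {(a, b). a \<in> S \<and> b \<in> S \<and> P a b > 0}"

definition strongly_connected_on :: "'s set \<Rightarrow> 's rel \<Rightarrow> bool" where
  "strongly_connected_on S E \<longleftrightarrow> (\<forall>a\<in>S. \<forall>b\<in>S. \<exists>m. (a, b) \<in> E ^^ m)"

definition return_gcd :: "'s rel \<Rightarrow> 's \<Rightarrow> nat" where
  "return_gcd E a = Gcd {m. m \<ge> 1 \<and> (a, a) \<in> E ^^ m}"

lemma mstep_nonneg: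
  assumes nonneg: "\<And>a b. a \<in> S \<Longrightarrow> b \<in> S \<Longrightarrow> P a b \<ge> 0"
    and "a \<in> S" "b \<in> S"
  shows "mstep S P m a b \<ge> 0"
  using \<open>b \<in> S\<close>
proof (induction m arbitrary: b)
  case (Suc m)
  then show ?case by (simp, intro infsum_nonneg) (simp add: nonneg)
qed simp

lemma mstep_pos_iff_relpow:
  assumes nonneg: "\<And>a b. a \<in> S \<Longrightarrow> b \<in> S \<Longrightarrow> P a b \<ge> 0"
    and finite_pred: "\<And>b. b \<in> S \<Longrightarrow> finite {c \<in> S. P c b \<noteq> 0}"
    and "a \<in> S" "b \<in> S"
  shows "mstep S P m a b > 0 \<longleftrightarrow> (a, b) \<in> pos_edges S P ^^ m"
  using \<open>b \<in> S\<close>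
proof (induction m arbitrary: b)
  case 0
  then show ?case by simp
next
  case (Suc m)
  let ?T = "{c \<in> S. P c b \<noteq> 0}"
  let ?f = "\<lambda>c. mstep S P m a c * P c b"
  have f_nonneg: "\<And>c. c \<in> ?T \<Longrightarrow> ?f c \<ge> 0"
    using mstep_nonneg[OF nonneg \<open>a \<in> S\<close>] nonneg Suc.prems by simp
  have "mstep S P (Suc m) a b = infsum ?f ?T"
    by (simp, intro infsum_cong_neutral) auto
  also have "\<dots> = sum ?f ?T"
    using finite_pred[OF Suc.prems] by simp
  also have "\<dots> > 0 \<longleftrightarrow> (\<exists>c\<in>?T. ?f c > 0)"
    using sum_nonneg_eq_0_iff[OF finite_pred[OF Suc.prems] f_nonneg] sum_nonneg[of ?T ?f] f_nonneg
    by (auto simp: order_less_le)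
  also have "\<dots> \<longleftrightarrow> (\<exists>c\<in>S. mstep S P m a c > 0 \<and> P c b > 0)"
    using mstep_nonneg[OF nonneg \<open>a \<in> S\<close>] nonneg[OF _ Suc.prems]
    by (auto simp: zero_less_mult_iff order_less_le)
  also have "\<dots> \<longleftrightarrow> (a, b) \<in> pos_edges S P ^^ Suc m"
    using Suc.IH Suc.prems by (auto simp: pos_edges_def elim!: relpow_Suc_E intro: relpow_Suc_I)
  finally show ?case .
qed

lemma irreducible_chain_iff_strongly_connected:
  assumes "\<And>a b. a \<in> S \<Longrightarrow> b \<in> S \<Longrightarrow> P a b \<ge> 0"
    and "\<And>b. b \<in> S \<Longrightarrow> finite {c \<in> S. P c b \<noteq> 0}"
  shows "irreducible_chain S P \<longleftrightarrow> strongly_connected_on S (pos_edges S P)"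
  using mstep_pos_iff_relpow[OF assms]
  by (simp add: irreducible_chain_def strongly_connected_on_def)

lemma period_of_eq_return_gcd:
  assumes "\<And>a b. a \<in> S \<Longrightarrow> b \<in> S \<Longrightarrow> P a b \<ge> 0"
    and "\<And>b. b \<in> S \<Longrightarrow> finite {c \<in> S. P c b \<noteq> 0}"
    and "a \<in> S"
  shows "period_of S P a = return_gcd (pos_edges S P) a"
  using mstep_pos_iff_relpow[OF assms(1,2) \<open>a \<in> S\<close> \<open>a \<in> S\<close>]
  by (simp add: period_of_def return_gcd_def)

lemma return_gcd_dvd:
  assumes "(a, a) \<in> E ^^ m"
  shows "return_gcd E a dvd m"
  using assms by (cases "m = 0") (auto simp: return_gcd_def intro: Gcd_dvd)

lemma return_gcd_pos:
  assumes "strongly_connected_on S E" and "(a, b) \<in> E" "a \<in> S" "b \<in> S"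
  shows "return_gcd E a > 0"
proof -
  obtain m where "(b, a) \<in> E ^^ m"
    using assms by (auto simp: strongly_connected_on_def)
  with \<open>(a, b) \<in> E\<close> have "(a, a) \<in> E ^^ Suc m" by (rule relpow_Suc_I2)
  then have "return_gcd E a dvd Suc m" by (rule return_gcd_dvd)
  then show ?thesis by (cases "return_gcd E a") auto
qed

text \<open>The phase of b is minus the length of some walk from b back to the base point.\<close>
lemma phase_exists:
  assumes conn: "strongly_connected_on S E" and "a0 \<in> S"
  obtains \<phi> :: "'s \<Rightarrow> int" where
    "\<And>m b c. (b, c) \<in> E ^^ m \<Longrightarrow> b \<in> S \<Longrightarrow> c \<in> S
      \<Longrightarrow> int (return_gcd E a0) dvd \<phi> c - \<phi> b - int m"
proof
  have reach: "\<exists>m. (b, c) \<in> E ^^ m" if "b \<in> S" "c \<in> S" for b c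
    using conn that by (simp add: strongly_connected_on_def)
  define k where "k b = (SOME k. (b, a0) \<in> E ^^ k)" for b
  have k: "(b, a0) \<in> E ^^ k b" if "b \<in> S" for b
    unfolding k_def using reach[OF that \<open>a0 \<in> S\<close>] by (rule someI_ex)
  fix m b c assume bc: "(b, c) \<in> E ^^ m" and "b \<in> S" "c \<in> S"
  obtain j where j: "(a0, b) \<in> E ^^ j"
    using reach \<open>a0 \<in> S\<close> \<open>b \<in> S\<close> by blast
  have "return_gcd E a0 dvd j + m + k c"
    using relpow_trans[OF relpow_trans[OF j bc] k[OF \<open>c \<in> S\<close>]] by (rule return_gcd_dvd)
  moreover have "return_gcd E a0 dvd j + k b"
    using relpow_trans[OF j k[OF \<open>b \<in> S\<close>]] by (rule return_gcd_dvd)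
  ultimately have "int (return_gcd E a0) dvd (int j + int (k b)) - (int j + int m + int (k c))"
    by (metis dvd_diff int_dvd_int_iff of_nat_add)
  then show "int (return_gcd E a0) dvd (- int (k c)) - (- int (k b)) - int m"
    by (simp add: algebra_simps)
qed

lemma relpow_reverse:
  assumes "\<And>a b. (a, b) \<in> E \<Longrightarrow> (R b, R a) \<in> E"
  shows "(a, b) \<in> E ^^ m \<Longrightarrow> (R b, R a) \<in> E ^^ m"
proof (induction m arbitrary: b)
  case (Suc m)
  then obtain c where "(a, c) \<in> E ^^ m" "(c, b) \<in> E" by (blast elim: relpow_Suc_E)
  then show ?case using Suc.IH assms by (blast intro: relpow_Suc_I2)
qed simp

lemma phase_reverse_const:
  fixes \<phi> :: "'s \<Rightarrow> int"
  assumes phase: "\<And>m b c. (b, c) \<in> E ^^ m \<Longrightarrow> b \<in> S \<Longrightarrow> c \<in> S \<Longrightarrow> D dvd \<phi> c - \<phi> b - int m"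
    and conn: "strongly_connected_on S E"
    and R_closed: "\<And>a. a \<in> S \<Longrightarrow> R a \<in> S"
    and R_reverse: "\<And>a b. (a, b) \<in> E \<Longrightarrow> (R b, R a) \<in> E"
    and "a0 \<in> S" "a \<in> S"
  shows "D dvd (\<phi> a + \<phi> (R a)) - (\<phi> a0 + \<phi> (R a0))"
proof -
  obtain m where walk: "(a0, a) \<in> E ^^ m"
    using conn \<open>a0 \<in> S\<close> \<open>a \<in> S\<close> by (auto simp: strongly_connected_on_def)
  have forward: "D dvd \<phi> a - \<phi> a0 - int m"
    using phase[OF walk \<open>a0 \<in> S\<close> \<open>a \<in> S\<close>] .
  have backward: "D dvd \<phi> (R a0) - \<phi> (R a) - int m"
    using phase[OF relpow_reverse[OF R_reverse walk] R_closed[OF \<open>a \<in> S\<close>] R_closed[OF \<open>a0 \<in> S\<close>]] .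
  have "(\<phi> a + \<phi> (R a)) - (\<phi> a0 + \<phi> (R a0))
      = (\<phi> a - \<phi> a0 - int m) - (\<phi> (R a0) - \<phi> (R a) - int m)"
    by simp
  then show ?thesis using dvd_diff[OF forward backward] by (simp only:)
qed

lemma finite_signed_idx: "finite (signed_idx n)"
  by (rule finite_subset[of _ "{- int n..int n}"]) (auto simp: signed_idx_def)

lemma uminus_signed_idx: "s \<in> signed_idx n \<Longrightarrow> - s \<in> signed_idx n"
  by (auto simp: signed_idx_def)

locale nb_walk =
  fixes G (structure) and n :: nat and x :: "nat \<Rightarrow> 'g" and \<alpha> :: "int \<Rightarrow> int \<Rightarrow> real"
  assumes group: "group G"
    and x_closed: "\<And>i. i \<in> {1..n} \<Longrightarrow> x i \<in> carrier G"
    and alpha_pos: "\<And>t s. t \<in> signed_idx n \<Longrightarrow> s \<in> signed_idx n \<Longrightarrow> s \<noteq> - t \<Longrightarrow> \<alpha> t s > 0"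
begin

abbreviation \<Omega> :: "('g \<times> int) set" where "\<Omega> \<equiv> nbstates G n"
abbreviation P :: "'g \<times> int \<Rightarrow> 'g \<times> int \<Rightarrow> real" where "P \<equiv> nb_trans G x \<alpha>"
abbreviation E :: "('g \<times> int) rel" where "E \<equiv> pos_edges \<Omega> P"

lemma gen_pow_closed:
  assumes "s \<in> signed_idx n"
  shows "gen_pow G x s \<in> carrier G"
proof -
  have "nat \<bar>s\<bar> \<in> {1..n}" using assms by (auto simp: signed_idx_def)
  then show ?thesis
    using x_closed group.inv_closed[OF group] by (cases "s > 0") (auto simp: gen_pow_def)
qed

lemma gen_pow_uminus:
  assumes "s \<in> signed_idx n"
  shows "gen_pow G x (- s) = inv (gen_pow G x s)"
proof -
  have "nat \<bar>s\<bar> \<in> {1..n}" "s \<noteq> 0" using assms by (auto simp: signed_idx_def)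
  then show ?thesis
    using x_closed group.inv_inv[OF group] by (cases "s > 0") (auto simp: gen_pow_def)
qed

lemma mult_gen_pow_cancel:
  assumes "g \<in> carrier G" "s \<in> signed_idx n"
  shows "g \<otimes> gen_pow G x s \<otimes> gen_pow G x (- s) = g"
  using assms gen_pow_closed group
  by (simp add: gen_pow_uminus group.inv_closed group.is_monoid monoid.m_assoc group.r_inv)

lemma nb_edge_iff:
  "(a, b) \<in> E \<longleftrightarrow> a \<in> \<Omega> \<and> b \<in> \<Omega> \<and> fst b = fst a \<otimes> gen_pow G x (snd b) \<and> snd b \<noteq> - snd a"
  by (auto simp: pos_edges_def nb_trans_def nbstates_def intro!: alpha_pos)

lemma nb_edge_step:
  assumes "g \<in> carrier G" "s \<in> signed_idx n" "t \<in> signed_idx n" "t \<noteq> - s"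
  shows "((g, s), (g \<otimes> gen_pow G x t, t)) \<in> E"
proof -
  have "(g, s) \<in> \<Omega>" "(g \<otimes> gen_pow G x t, t) \<in> \<Omega>"
    using assms gen_pow_closed[of t] group.is_monoid[OF group]
    by (simp_all add: nbstates_def monoid.m_closed)
  then show ?thesis using assms by (simp add: nb_edge_iff)
qed

lemma nb_trans_nonneg: "a \<in> \<Omega> \<Longrightarrow> b \<in> \<Omega> \<Longrightarrow> P a b \<ge> 0"
  using alpha_pos by (fastforce simp: nb_trans_def nbstates_def)

lemma finite_predecessors:
  assumes "b \<in> \<Omega>"
  shows "finite {c \<in> \<Omega>. P c b \<noteq> 0}"
proof (rule finite_subset)
  show "{c \<in> \<Omega>. P c b \<noteq> 0} \<subseteq> {fst b \<otimes> gen_pow G x (- snd b)} \<times> signed_idx n"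
    using assms mult_gen_pow_cancel by (auto simp: nb_trans_def nbstates_def split: if_splits)
qed (simp add: finite_signed_idx)

lemma irreducible_iff_strongly_connected: "irreducible_chain \<Omega> P \<longleftrightarrow> strongly_connected_on \<Omega> E"
  by (rule irreducible_chain_iff_strongly_connected) (use nb_trans_nonneg finite_predecessors in auto)

lemma period_of_eq: "a \<in> \<Omega> \<Longrightarrow> period_of \<Omega> P a = return_gcd E a"
  by (rule period_of_eq_return_gcd) (use nb_trans_nonneg finite_predecessors in auto)

definition reverse_state :: "'g \<times> int \<Rightarrow> 'g \<times> int" where
  "reverse_state a = (fst a \<otimes> gen_pow G x (- snd a), - snd a)"

lemma reverse_state_closed: "a \<in> \<Omega> \<Longrightarrow> reverse_state a \<in> \<Omega>"
  using gen_pow_closed uminus_signed_idx group.is_monoid[OF group]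
  by (auto simp: reverse_state_def nbstates_def intro!: monoid.m_closed)

lemma reverse_state_edge:
  assumes "(a, b) \<in> E"
  shows "(reverse_state b, reverse_state a) \<in> E"
proof -
  have "a \<in> \<Omega>" "b \<in> \<Omega>" and b_eq: "fst b = fst a \<otimes> gen_pow G x (snd b)"
    and "snd b \<noteq> - snd a"
    using assms by (simp_all add: nb_edge_iff)
  have "fst a \<in> carrier G" "snd b \<in> signed_idx n"
    using \<open>a \<in> \<Omega>\<close> \<open>b \<in> \<Omega>\<close> by (auto simp: nbstates_def)
  then have "reverse_state b = (fst a, - snd b)"
    by (simp add: reverse_state_def b_eq mult_gen_pow_cancel)
  moreover have "reverse_state a = (fst a \<otimes> gen_pow G x (- snd a), - snd a)"
    by (simp add: reverse_state_def)
  ultimately show ?thesis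
    using reverse_state_closed[OF \<open>a \<in> \<Omega>\<close>] reverse_state_closed[OF \<open>b \<in> \<Omega>\<close>] \<open>snd b \<noteq> - snd a\<close>
    by (simp add: nb_edge_iff)
qed

lemma phase_fibre_const:
  fixes \<phi> :: "'g \<times> int \<Rightarrow> int"
  assumes n2: "n \<ge> 2"
    and edge_phase: "\<And>b c. (b, c) \<in> E \<Longrightarrow> D dvd \<phi> c - \<phi> b - 1"
    and reverse_phase: "\<And>a. a \<in> \<Omega> \<Longrightarrow> D dvd \<phi> a + \<phi> (reverse_state a) - c0"
    and g: "g \<in> carrier G" and s: "s \<in> signed_idx n" and s': "s' \<in> signed_idx n"
  shows "D dvd \<phi> (g, s') - \<phi> (g, s)"
proof -
  \<comment> \<open>Leave (g, s) with index -t; reversing the target state gives (g, t).\<close>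
  have turn: "D dvd \<phi> (g, t) + \<phi> (g, s) + 1 - c0"
    if t: "t \<in> signed_idx n" and s: "s \<in> signed_idx n" and "t \<noteq> s" for s t
  proof -
    define b where "b = (g \<otimes> gen_pow G x (- t), - t)"
    have "((g, s), b) \<in> E"
      unfolding b_def using g s uminus_signed_idx[OF t] \<open>t \<noteq> s\<close> by (intro nb_edge_step) auto
    then have forward: "D dvd \<phi> b - \<phi> (g, s) - 1" by (rule edge_phase)
    have "reverse_state b = (g, t)"
      using mult_gen_pow_cancel[OF g uminus_signed_idx[OF t]] by (simp add: reverse_state_def b_def)
    moreover have "b \<in> \<Omega>" using \<open>((g, s), b) \<in> E\<close> by (simp add: nb_edge_iff)
    ultimately have backward: "D dvd \<phi> b + \<phi> (g, t) - c0"
      using reverse_phase by fastforce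
    have "\<phi> (g, t) + \<phi> (g, s) + 1 - c0 = (\<phi> b + \<phi> (g, t) - c0) - (\<phi> b - \<phi> (g, s) - 1)"
      by simp
    then show ?thesis using dvd_diff[OF backward forward] by (simp only:)
  qed
  obtain t where t: "t \<in> signed_idx n" "t \<noteq> s" "t \<noteq> s'"
  proof -
    have "{1, -1, 2} \<subseteq> signed_idx n" using n2 by (auto simp: signed_idx_def)
    moreover have "\<exists>t\<in>{1, -1, 2}. t \<noteq> s \<and> t \<noteq> s'" by auto
    ultimately show ?thesis using that by blast
  qed
  have "\<phi> (g, s') - \<phi> (g, s) = (\<phi> (g, t) + \<phi> (g, s') + 1 - c0) - (\<phi> (g, t) + \<phi> (g, s) + 1 - c0)"
    by simp
  then show ?thesis using dvd_diff[OF turn[OF t(1) s' t(3)] turn[OF t(1) s t(2)]] by (simp only:)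
qed

lemma return_gcd_dvd_two:
  assumes n2: "n \<ge> 2" and conn: "strongly_connected_on \<Omega> E" and a0: "a0 \<in> \<Omega>"
  shows "return_gcd E a0 dvd 2"
proof -
  define D where "D = int (return_gcd E a0)"
  obtain \<phi> where phase: "\<And>m b c. (b, c) \<in> E ^^ m \<Longrightarrow> b \<in> \<Omega> \<Longrightarrow> c \<in> \<Omega> \<Longrightarrow> D dvd \<phi> c - \<phi> b - int m"
    using phase_exists[OF conn a0] unfolding D_def by blast
  have edge_phase: "D dvd \<phi> c - \<phi> b - 1" if "(b, c) \<in> E" for b c
    using phase[of b c 1] that by (simp add: nb_edge_iff)
  have fibre: "D dvd \<phi> (g, s') - \<phi> (g, s)"
    if "g \<in> carrier G" "s \<in> signed_idx n" "s' \<in> signed_idx n" for g s s'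
    using phase_fibre_const[OF n2 edge_phase phase_reverse_const[OF phase conn reverse_state_closed
        reverse_state_edge a0] that] .
  obtain g s where g: "g \<in> carrier G" and s: "s \<in> signed_idx n"
    using a0 by (auto simp: nbstates_def)
  define g' where "g' = g \<otimes> gen_pow G x s"
  have g': "g' \<in> carrier G"
    using g gen_pow_closed[OF s] group.is_monoid[OF group] by (simp add: g'_def monoid.m_closed)
  have "s \<noteq> - s" using s by (simp add: signed_idx_def)
  then have "((g, s), (g', s)) \<in> E" "((g', - s), (g, - s)) \<in> E"
    using nb_edge_step[OF g s s] nb_edge_step[OF g' uminus_signed_idx[OF s] uminus_signed_idx[OF s]]
      mult_gen_pow_cancel[OF g s] by (simp_all add: g'_def)
  then have "D dvd \<phi> (g', s) - \<phi> (g, s) - 1" "D dvd \<phi> (g, - s) - \<phi> (g', - s) - 1"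
    by (simp_all add: edge_phase)
  moreover have "- 2 = (\<phi> (g', s) - \<phi> (g, s) - 1) + (\<phi> (g, - s) - \<phi> (g', - s) - 1)
      + (\<phi> (g', - s) - \<phi> (g', s)) + (\<phi> (g, s) - \<phi> (g, - s))"
    by simp
  ultimately have "D dvd - 2"
    using fibre[OF g' s uminus_signed_idx[OF s]] fibre[OF g uminus_signed_idx[OF s] s]
    by (metis dvd_add)
  then show ?thesis unfolding D_def
    by (metis dvd_minus_iff int_dvd_int_iff of_nat_numeral)
qed

lemma return_gcd_nb_pos:
  assumes conn: "strongly_connected_on \<Omega> E" and a: "a \<in> \<Omega>"
  shows "return_gcd E a > 0"
proof -
  obtain g s where a_eq: "a = (g, s)" and g: "g \<in> carrier G" and s: "s \<in> signed_idx n"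
    using a by (auto simp: nbstates_def)
  have "s \<noteq> - s" using s by (simp add: signed_idx_def)
  then have edge: "(a, (g \<otimes> gen_pow G x s, s)) \<in> E"
    unfolding a_eq by (rule nb_edge_step[OF g s s])
  then have "(g \<otimes> gen_pow G x s, s) \<in> \<Omega>" unfolding nb_edge_iff by blast
  then show ?thesis by (rule return_gcd_pos[OF conn edge a])
qed

end

theorem mainTheorem2:
  fixes G (structure) and n :: nat and x :: "nat \<Rightarrow> 'g"
    and \<alpha> :: "int \<Rightarrow> int \<Rightarrow> real" and \<beta> :: "int \<Rightarrow> real"
  assumes grp: "group G"
    and n2: "n \<ge> 2"
    and xG: "\<And>i. i \<in> {1..n} \<Longrightarrow> x i \<in> carrier G"
    and alpha_pos: "\<And>t s. t \<in> signed_idx n \<Longrightarrow> s \<in> signed_idx n \<Longrightarrow> s \<noteq> - t \<Longrightarrow> \<alpha> t s > 0"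
    and alpha_sum: "\<And>t. t \<in> signed_idx n \<Longrightarrow> (\<Sum>s\<in>{s \<in> signed_idx n. s \<noteq> - t}. \<alpha> t s) = 1"
    and beta_pos: "\<And>s. s \<in> signed_idx n \<Longrightarrow> \<beta> s > 0"
    and beta_sum: "(\<Sum>s\<in>signed_idx n. \<beta> s) = 1"
    and irr: "irreducible_chain (nbstates G n) (nb_trans G x \<alpha>)"
  shows "\<forall>a\<in>nbstates G n. period_of (nbstates G n) (nb_trans G x \<alpha>) a \<in> {1, 2}"
proof
  interpret nb_walk G n x \<alpha> by (rule nb_walk.intro) (use grp xG alpha_pos in auto)
  have conn: "strongly_connected_on \<Omega> E"
    using irr irreducible_iff_strongly_connected by blast
  fix a assume a: "a \<in> \<Omega>"
  have "return_gcd E a dvd 2" "return_gcd E a > 0"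
    using return_gcd_dvd_two[OF n2 conn a] return_gcd_nb_pos[OF conn a] .
  then have "return_gcd E a \<in> {1, 2}"
    using dvd_imp_le[of "return_gcd E a" 2] by (auto simp: le_Suc_eq)
  then show "period_of \<Omega> P a \<in> {1, 2}"
    using period_of_eq[OF a] by simp
qed

end
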